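(* Let $G$ be an edge-magic 2-regular simple graph (in particular, an edge-magic bipartite 2-regular graph, i.e. a disjoint union of even cycles) and let $n\ge1$. Then $|\tau_{G\odot\overline{K}_n}|\ge (n+1)|\tau_G|+2$.
   Context: An edge-magic labeling of a $(p,q)$-graph $G$ (with $p$ vertices and $q$ edges) is a bijection $f:V(G)\cup E(G)\to[1,p+q]$ such that $f(x)+f(xy)+f(y)$ equals a constant $\mathrm{val}(f)$ (the valence) for every edge $xy$; $G$ is edge-magic if it has one. For a graph $H$, $\tau_H$ is the set of integers that are valences of edge-magic labelings of $H$. $G\odot\overline{K}_n$ (the corona, or crown when $G$ is a cycle) is the graph obtained from $G$ by attaching $n$ new pendant vertices to each vertex of $G$. *)

theory Defs
  imports Main
begin

definition simple_graph :: "'a set \<Rightarrow> 'a set set \<Rightarrow> bool" where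
  "simple_graph V E \<longleftrightarrow> finite V \<and>
     (\<forall>e\<in>E. \<exists>u v. e = {u, v} \<and> u \<noteq> v \<and> u \<in> V \<and> v \<in> V)"

definition degree :: "'a set set \<Rightarrow> 'a \<Rightarrow> nat" where
  "degree E v = card {e\<in>E. v \<in> e}"

definition two_regular :: "'a set \<Rightarrow> 'a set set \<Rightarrow> bool" where
  "two_regular V E \<longleftrightarrow> (\<forall>v\<in>V. degree E v = 2)"

definition edge_magic_labeling ::
  "'a set \<Rightarrow> 'a set set \<Rightarrow> ('a + 'a set \<Rightarrow> nat) \<Rightarrow> nat \<Rightarrow> bool" where
  "edge_magic_labeling V E f k \<longleftrightarrow>
     bij_betw f (Inl ` V \<union> Inr ` E) {1 .. card V + card E} \<and>
     (\<forall>x\<in>V. \<forall>y\<in>V. {x, y} \<in> E \<longrightarrow> f (Inl x) + f (Inr {x, y}) + f (Inl y) = k)"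

definition edge_magic :: "'a set \<Rightarrow> 'a set set \<Rightarrow> bool" where
  "edge_magic V E \<longleftrightarrow> (\<exists>f k. edge_magic_labeling V E f k)"

definition tau :: "'a set \<Rightarrow> 'a set set \<Rightarrow> nat set" where
  "tau V E = {k. \<exists>f. edge_magic_labeling V E f k}"

text \<open>Corona G \<odot> (complement of K_n): vertex (v,0) is the original v, vertices (v,i),
  1 \<le> i \<le> n, are the n pendant vertices attached to v.\<close>
definition corona_V :: "'a set \<Rightarrow> nat \<Rightarrow> ('a \<times> nat) set" where
  "corona_V V n = V \<times> {0..n}"

definition corona_E :: "'a set \<Rightarrow> 'a set set \<Rightarrow> nat \<Rightarrow> ('a \<times> nat) set set" where
  "corona_E V E n =
     {{(u, 0), (w, 0)} | u w. {u, w} \<in> E} \<union> {{(v, 0), (v, i)} | v i. v \<in> V \<and> 1 \<le> i \<and> i \<le> n}"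

end

(* Orient the cycles of G so that each vertex v has a successor \<psi> v and the edges are exactly
   the pairs {v, \<psi> v}.  Given an edge-magic labeling g of G with valence k (on p vertices) and a
   shift r \<le> n, label the corona by pairs in [1, 2p] \<times> [0, n]: the vertex (v, 0) gets (g v, r),
   the pendant vertices at v get g (\<psi> v) paired with the values in [0, n] - {r}, the cycle edges
   get (g e, n - r) and the pendant edges at v get g {v, \<psi> v} paired with the complementary values.
   This is a bijection, and along every edge the first components add up to k and the second ones
   to n + r.  Encoding the pairs affinely by (x, t) \<mapsto> (n + 1) x + t - n or (x, t) \<mapsto> x + 2 p t
   (blocks of n + 1 consecutive numbers, resp. layers of 2 p numbers) gives edge-magic labelings of
   the corona with valences (n + 1) k + r - 2 n, which are (n + 1) |\<tau>_G| distinct numbers, and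
   k + 2 p (n + r).  Since every valence of G lies strictly between 2 p + 2 and 4 p + 1, the
   latter with k = min \<tau>_G, r = 0 and with k = max \<tau>_G, r = n are two further valences, below
   and above all the former. *)

theory Submission
  imports Defs
begin

section \<open>Simple 2-regular graphs\<close>

lemma simple_graph_edgeE:
  assumes "simple_graph V E" "e \<in> E"
  obtains x y where "e = {x, y}" "x \<noteq> y" "x \<in> V" "y \<in> V"
proof -
  have "\<forall>e\<in>E. \<exists>x y. e = {x, y} \<and> x \<noteq> y \<and> x \<in> V \<and> y \<in> V"
    using assms(1) unfolding simple_graph_def by (rule conjunct2)
  with assms(2) show thesis
    using that by blast
qed

lemma simple_graph_edge_subset: "simple_graph V E \<Longrightarrow> e \<in> E \<Longrightarrow> e \<subseteq> V"
  by (erule simple_graph_edgeE) auto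

lemma simple_graph_card_edge: "simple_graph V E \<Longrightarrow> e \<in> E \<Longrightarrow> card e = 2"
  by (erule simple_graph_edgeE) auto

lemma simple_graph_finite:
  assumes "simple_graph V E"
  shows "finite V" "finite E"
proof -
  show "finite V" using assms unfolding simple_graph_def by blast
  have "E \<subseteq> Pow V" using simple_graph_edge_subset[OF assms] by blast
  then show "finite E" by (rule finite_subset) (simp add: \<open>finite V\<close>)
qed

lemma sum_edges_eq_sum_degree:
  fixes f :: "'a \<Rightarrow> 'b::comm_semiring_1"
  assumes "finite V" "finite E" "\<forall>e\<in>E. e \<subseteq> V"
  shows "(\<Sum>e\<in>E. \<Sum>x\<in>e. f x) = (\<Sum>v\<in>V. of_nat (degree E v) * f v)"
proof -
  have "(\<Sum>e\<in>E. \<Sum>x\<in>e. f x) = (\<Sum>e\<in>E. \<Sum>v\<in>V. if v \<in> e then f v else 0)"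
  proof (rule sum.cong[OF refl])
    fix e assume "e \<in> E"
    then have "V \<inter> e = e" using assms(3) by blast
    then show "(\<Sum>x\<in>e. f x) = (\<Sum>v\<in>V. if v \<in> e then f v else 0)"
      using sum.inter_restrict[OF assms(1), of f e] by simp
  qed
  also have "\<dots> = (\<Sum>v\<in>V. \<Sum>e\<in>E. if v \<in> e then f v else 0)"
    by (rule sum.swap)
  also have "\<dots> = (\<Sum>v\<in>V. of_nat (degree E v) * f v)"
    unfolding degree_def using assms(2) by (simp add: sum.If_cases Int_def)
  finally show ?thesis .
qed

lemma two_regular_card_edges:
  assumes "simple_graph V E" "two_regular V E"
  shows "card E = card V"
proof -
  have "2 * card E = (\<Sum>e\<in>E. card e)"
    using simple_graph_card_edge[OF assms(1)] by simp
  also have "\<dots> = (\<Sum>v\<in>V. of_nat (degree E v) * 1)"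
    using sum_edges_eq_sum_degree[of V E "\<lambda>_. 1::nat"] simple_graph_finite[OF assms(1)]
      simple_graph_edge_subset[OF assms(1)] by simp
  also have "\<dots> = 2 * card V"
    using assms(2) unfolding two_regular_def by simp
  finally show ?thesis by simp
qed

lemma two_regular_card_ge_2:
  assumes "simple_graph V E" "two_regular V E" "V \<noteq> {}"
  shows "2 \<le> card V"
proof -
  from assms(3) obtain v where "v \<in> V" by blast
  with assms(2) have "card {e\<in>E. v \<in> e} = 2"
    unfolding two_regular_def degree_def by blast
  then have "{e\<in>E. v \<in> e} \<noteq> {}" by (metis card.empty zero_neq_numeral)
  then obtain e where "e \<in> E" by blast
  then have "card e \<le> card V"
    by (rule card_mono[OF simple_graph_finite(1)[OF assms(1)] simple_graph_edge_subset[OF assms(1)]])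
  then show ?thesis
    using simple_graph_card_edge[OF assms(1) \<open>e \<in> E\<close>] by simp
qed

text \<open>A system of distinct incident edges, built greedily: after matching \<open>w\<close> with an edge
  \<open>{w, u}\<close>, only \<open>u\<close> can drop to degree one in the remaining graph.\<close>
lemma exists_inj_incident_edge:
  assumes "finite W" "finite E" "\<forall>e\<in>E. card e = 2"
    and "\<forall>w\<in>W. 2 \<le> degree E w \<or> (w = w0 \<and> 1 \<le> degree E w)"
  shows "\<exists>\<phi>. inj_on \<phi> W \<and> (\<forall>w\<in>W. w \<in> \<phi> w \<and> \<phi> w \<in> E)"
  using assms
proof (induction "card W" arbitrary: W E w0)
  case 0
  then show ?case by auto
next
  case (Suc m)
  define w where "w = (if w0 \<in> W then w0 else (SOME w. w \<in> W))"
  have "W \<noteq> {}" using Suc.hyps(2) by auto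
  then have wW: "w \<in> W"
    unfolding w_def by (simp add: some_in_eq)
  with Suc.prems(4) have "card {e\<in>E. w \<in> e} \<noteq> 0" unfolding degree_def by fastforce
  then obtain e where e: "e \<in> E" "w \<in> e"
    by (metis (no_types, lifting) card.empty empty_Collect_eq)
  moreover from e(1) Suc.prems(3) obtain x y where "e = {x, y}" "x \<noteq> y"
    by (meson card_2_iff)
  ultimately obtain u where eu: "e = {w, u}" "u \<noteq> w"
    by (metis doubleton_eq_iff insertE singletonD)
  have degree_remove: "degree (E - {e}) x = degree E x - (if x \<in> e then 1 else 0)" for x
  proof -
    have "{e'\<in>E - {e}. x \<in> e'} = {e'\<in>E. x \<in> e'} - {e}" by blast
    then show ?thesis
      unfolding degree_def using e(1) Suc.prems(2) by (simp add: card_Diff_singleton_if)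
  qed
  have "\<forall>x\<in>W - {w}. 2 \<le> degree (E - {e}) x \<or> (x = u \<and> 1 \<le> degree (E - {e}) x)"
  proof
    fix x assume x: "x \<in> W - {w}"
    then have "x \<noteq> w0 \<or> w0 \<notin> W" unfolding w_def by auto
    with x Suc.prems(4) have "2 \<le> degree E x" by auto
    show "2 \<le> degree (E - {e}) x \<or> (x = u \<and> 1 \<le> degree (E - {e}) x)"
    proof (cases "x = u")
      case True
      then show ?thesis using \<open>2 \<le> degree E x\<close> degree_remove[of x] by auto
    next
      case False
      then have "x \<notin> e" using x eu by auto
      then show ?thesis using \<open>2 \<le> degree E x\<close> degree_remove[of x] by simp
    qed
  qed
  moreover have "m = card (W - {w})" using Suc.hyps(2) wW by simp
  ultimately have "\<exists>\<phi>. inj_on \<phi> (W - {w}) \<and> (\<forall>x\<in>W - {w}. x \<in> \<phi> x \<and> \<phi> x \<in> E - {e})"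
    using Suc.prems(1-3) by (intro Suc.hyps(1)) auto
  then obtain \<phi> where \<phi>: "inj_on \<phi> (W - {w})" "\<forall>x\<in>W - {w}. x \<in> \<phi> x \<and> \<phi> x \<in> E - {e}"
    by blast
  have "inj_on (\<phi>(w := e)) (insert w (W - {w}))"
    unfolding inj_on_insert using \<phi> by (auto simp: inj_on_def)
  then have "inj_on (\<phi>(w := e)) W"
    using insert_Diff[OF wW] by simp
  moreover have "\<forall>x\<in>W. x \<in> (\<phi>(w := e)) x \<and> (\<phi>(w := e)) x \<in> E"
    using \<phi>(2) e by auto
  ultimately show ?case by (intro exI conjI)
qed

lemma two_regular_orientation:
  assumes G: "simple_graph V E" "two_regular V E"
  obtains \<psi> where "bij_betw \<psi> V V" "bij_betw (\<lambda>v. {v, \<psi> v}) V E"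
proof -
  have deg: "degree E v = 2" if "v \<in> V" for v
    using G(2) that unfolding two_regular_def by blast
  obtain \<phi> where \<phi>: "inj_on \<phi> V" "\<forall>v\<in>V. v \<in> \<phi> v \<and> \<phi> v \<in> E"
    using exists_inj_incident_edge[of V E undefined] simple_graph_finite[OF G(1)]
      simple_graph_card_edge[OF G(1)] deg by force
  have "\<phi> ` V = E"
    using card_image[OF \<phi>(1)] two_regular_card_edges[OF G] \<phi>(2)
    by (intro card_subset_eq simple_graph_finite(2)[OF G(1)]) auto
  with \<phi>(1) have bij_\<phi>: "bij_betw \<phi> V E"
    unfolding bij_betw_def by blast
  define \<psi> where "\<psi> v = the_elem (\<phi> v - {v})" for v
  have \<phi>_eq: "\<phi> v = {v, \<psi> v}" and \<psi>_ne: "\<psi> v \<noteq> v" and \<psi>_in: "\<psi> v \<in> V" if "v \<in> V" for v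
  proof -
    have "card (\<phi> v - {v}) = 1"
      using \<phi>(2) that simple_graph_card_edge[OF G(1)] by simp
    then obtain u where u: "\<phi> v - {v} = {u}" by (rule card_1_singletonE)
    then show "\<phi> v = {v, \<psi> v}" "\<psi> v \<noteq> v"
      using \<phi>(2) that unfolding \<psi>_def by auto
    show "\<psi> v \<in> V"
      using u \<phi>(2) that simple_graph_edge_subset[OF G(1)] unfolding \<psi>_def by fastforce
  qed
  have "inj_on \<psi> V"
  proof (rule inj_onI, rule ccontr)
    fix v w assume vw: "v \<in> V" "w \<in> V" "\<psi> v = \<psi> w" "v \<noteq> w"
    define u where "u = \<psi> v"
    have u: "u \<in> V" "u \<noteq> v" "u \<noteq> w"
      using \<psi>_in \<psi>_ne vw unfolding u_def by metis+
    \<comment> \<open>\<open>u\<close> would lie on the three distinct edges \<open>\<phi> u\<close>, \<open>\<phi> v\<close>, \<open>\<phi> w\<close>\<close>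
    have sub: "{\<phi> u, \<phi> v, \<phi> w} \<subseteq> {e\<in>E. u \<in> e}"
      using \<phi>(2) \<phi>_eq u vw unfolding u_def by auto
    have "\<phi> u \<noteq> \<phi> v" "\<phi> u \<noteq> \<phi> w" "\<phi> v \<noteq> \<phi> w"
      using inj_on_contraD[OF \<phi>(1)] u vw by blast+
    then have "3 = card {\<phi> u, \<phi> v, \<phi> w}" by simp
    also have "\<dots> \<le> card {e\<in>E. u \<in> e}"
      using sub simple_graph_finite(2)[OF G(1)] by (intro card_mono) auto
    also have "\<dots> = 2"
      using deg[OF u(1)] unfolding degree_def .
    finally show False by simp
  qed
  moreover have "\<psi> ` V = V"
    using card_image[OF \<open>inj_on \<psi> V\<close>] \<psi>_in
    by (intro card_subset_eq simple_graph_finite(1)[OF G(1)]) auto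
  ultimately have "bij_betw \<psi> V V"
    unfolding bij_betw_def ..
  moreover have "bij_betw (\<lambda>v. {v, \<psi> v}) V E"
    using bij_betw_cong[of V \<phi> "\<lambda>v. {v, \<psi> v}" E] \<phi>_eq bij_\<phi> by blast
  ultimately show thesis by (rule that)
qed

section \<open>Valences of 2-regular graphs\<close>

lemma edge_magic_labelingD:
  "edge_magic_labeling V E g k \<Longrightarrow> x \<in> V \<Longrightarrow> y \<in> V \<Longrightarrow> {x, y} \<in> E
    \<Longrightarrow> g (Inl x) + g (Inr {x, y}) + g (Inl y) = k"
  unfolding edge_magic_labeling_def by simp

lemma edge_magic_labeling_edge:
  assumes "simple_graph V E" "edge_magic_labeling V E g k" "e \<in> E"
  shows "g (Inr e) + (\<Sum>x\<in>e. g (Inl x)) = k"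
proof -
  from assms(1,3) obtain x y where xy: "e = {x, y}" "x \<noteq> y" "x \<in> V" "y \<in> V"
    by (rule simple_graph_edgeE)
  then have "g (Inl x) + g (Inr e) + g (Inl y) = k"
    using edge_magic_labelingD[OF assms(2)] assms(3) by simp
  then show ?thesis
    using xy(1,2) by simp
qed

lemma sum_edge_magic_labeling:
  assumes "simple_graph V E" "edge_magic_labeling V E g k"
  shows "(\<Sum>v\<in>V. g (Inl v)) + (\<Sum>e\<in>E. g (Inr e)) = (\<Sum>i = 1..card V + card E. i)"
proof -
  have "bij_betw g (Inl ` V \<union> Inr ` E) {1..card V + card E}"
    using assms(2) unfolding edge_magic_labeling_def by blast
  then have "(\<Sum>i = 1..card V + card E. i) = (\<Sum>z\<in>Inl ` V \<union> Inr ` E. g z)"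
    by (rule sum.reindex_bij_betw[symmetric])
  also have "\<dots> = (\<Sum>z\<in>Inl ` V. g z) + (\<Sum>z\<in>Inr ` E. g z)"
    using simple_graph_finite[OF assms(1)] by (intro sum.union_disjoint) auto
  also have "\<dots> = (\<Sum>v\<in>V. g (Inl v)) + (\<Sum>e\<in>E. g (Inr e))"
    by (simp add: sum.reindex)
  finally show ?thesis ..
qed

text \<open>Summing the valence over all edges counts each vertex label twice and each edge label once.\<close>
lemma two_regular_valence_eq:
  assumes G: "simple_graph V E" "two_regular V E" and g: "edge_magic_labeling V E g k"
  shows "card V * k = card V * (2 * card V + 1) + (\<Sum>v\<in>V. g (Inl v))"
proof -
  define p where "p = card V"
  have cardE: "card E = p"
    unfolding p_def by (rule two_regular_card_edges[OF G])
  have "2 * (\<Sum>i = 1..2 * p. i) = 2 * (p * (2 * p + 1))"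
    using double_gauss_sum_from_Suc_0[of "2 * p", where 'a = nat] by simp
  then have total: "(\<Sum>v\<in>V. g (Inl v)) + (\<Sum>e\<in>E. g (Inr e)) = p * (2 * p + 1)"
    using sum_edge_magic_labeling[OF G(1) g] cardE unfolding p_def by (simp add: mult_2)
  have "p * k = (\<Sum>e\<in>E. g (Inr e) + (\<Sum>x\<in>e. g (Inl x)))"
    using edge_magic_labeling_edge[OF G(1) g] cardE by simp
  also have "\<dots> = (\<Sum>e\<in>E. g (Inr e)) + (\<Sum>v\<in>V. of_nat (degree E v) * g (Inl v))"
    using simple_graph_finite[OF G(1)] simple_graph_edge_subset[OF G(1)]
    by (simp add: sum.distrib sum_edges_eq_sum_degree)
  also have "\<dots> = (\<Sum>e\<in>E. g (Inr e)) + 2 * (\<Sum>v\<in>V. g (Inl v))"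
    using G(2) unfolding two_regular_def by (simp add: sum_distrib_left)
  finally show ?thesis
    using total unfolding p_def by simp
qed

lemma two_regular_edge_magic_labeling_bij:
  assumes "simple_graph V E" "two_regular V E" "edge_magic_labeling V E g k"
  shows "bij_betw g (Inl ` V \<union> Inr ` E) {1..2 * card V}"
  using assms(3) two_regular_card_edges[OF assms(1,2)] unfolding edge_magic_labeling_def
  by (simp add: mult_2)

lemma two_regular_valence_bounds:
  assumes G: "simple_graph V E" "two_regular V E" "V \<noteq> {}" and g: "edge_magic_labeling V E g k"
  shows "2 * card V + 2 < k" "k < 4 * card V + 1"
proof -
  define p where "p = card V"
  have fin: "finite V" by (rule simple_graph_finite(1)[OF G(1)])
  have bij: "bij_betw g (Inl ` V \<union> Inr ` E) {1..2 * p}"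
    unfolding p_def by (rule two_regular_edge_magic_labeling_bij[OF G(1,2) g])
  then have range: "g (Inl v) \<in> {1..2 * p}" if "v \<in> V" for v
    using that by (auto dest: bij_betwE)
  from bij have inj: "inj_on (\<lambda>v. g (Inl v)) V"
    unfolding bij_betw_def inj_on_def by blast
  have "1 < card V"
    using two_regular_card_ge_2[OF G(1-3)] by simp
  then obtain a c where ac: "a \<in> V" "c \<in> V" "a \<noteq> c"
    using card_le_Suc0_iff_eq[OF fin] by (auto simp: not_le)
  then have "g (Inl a) \<noteq> g (Inl c)"
    using inj_on_contraD[OF inj] by blast
  \<comment> \<open>two distinct vertex labels rule out the extreme sums \<open>p\<close> and \<open>2 p\<^sup>2\<close>\<close>
  then have "1 < g (Inl a) \<or> 1 < g (Inl c)" "g (Inl a) < 2 * p \<or> g (Inl c) < 2 * p"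
    using range[OF ac(1)] range[OF ac(2)] by auto
  then have "\<exists>v\<in>V. 1 < g (Inl v)" "\<exists>v\<in>V. g (Inl v) < 2 * p"
    using ac(1,2) by auto
  then have "(\<Sum>v\<in>V. 1) < (\<Sum>v\<in>V. g (Inl v))" "(\<Sum>v\<in>V. g (Inl v)) < (\<Sum>v\<in>V. 2 * p)"
    using range by (auto intro!: sum_strict_mono_ex1[OF fin] simp del: sum_constant)
  then have "p < (\<Sum>v\<in>V. g (Inl v))" "(\<Sum>v\<in>V. g (Inl v)) < p * (2 * p)"
    unfolding p_def by simp_all
  moreover have "p * k = p * (2 * p + 1) + (\<Sum>v\<in>V. g (Inl v))"
    using two_regular_valence_eq[OF G(1,2) g] unfolding p_def .
  ultimately have "p * (2 * p + 2) < p * k" "p * k < p * (4 * p + 1)"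
    by (simp_all add: algebra_simps)
  then show "2 * card V + 2 < k" "k < 4 * card V + 1"
    unfolding p_def by (meson mult_less_cancel1)+
qed

lemma finite_tau:
  assumes "x \<in> V" "y \<in> V" "{x, y} \<in> E"
  shows "finite (tau V E)"
proof (rule finite_subset)
  show "tau V E \<subseteq> {..3 * (card V + card E)}"
  proof
    fix k assume "k \<in> tau V E"
    then obtain g where g: "edge_magic_labeling V E g k"
      unfolding tau_def by blast
    then have bound: "g z \<le> card V + card E" if "z \<in> Inl ` V \<union> Inr ` E" for z
      using that unfolding edge_magic_labeling_def by (auto dest: bij_betwE)
    have "g (Inl x) \<le> card V + card E" "g (Inr {x, y}) \<le> card V + card E"
      "g (Inl y) \<le> card V + card E"
      using assms by (auto intro!: bound)
    then have "g (Inl x) + g (Inr {x, y}) + g (Inl y) \<le> 3 * (card V + card E)"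
      by simp
    then show "k \<in> {..3 * (card V + card E)}"
      using edge_magic_labelingD[OF g assms] by simp
  qed
qed simp

section \<open>Edge-magic labelings from pair labelings\<close>

lemma edge_magic_labeling_comp:
  fixes h :: "'a + 'a set \<Rightarrow> nat \<times> nat" and F :: "nat \<times> nat \<Rightarrow> nat"
  assumes h: "bij_betw h (Inl ` V \<union> Inr ` E) P"
    and F: "bij_betw F P {1..card V + card E}"
    and F_affine: "\<And>x t. (x, t) \<in> P \<Longrightarrow> F (x, t) + d = a * x + b * t"
    and h_sums: "\<And>x y. x \<in> V \<Longrightarrow> y \<in> V \<Longrightarrow> {x, y} \<in> E \<Longrightarrow>
        fst (h (Inl x)) + fst (h (Inr {x, y})) + fst (h (Inl y)) = k \<and>
        snd (h (Inl x)) + snd (h (Inr {x, y})) + snd (h (Inl y)) = s"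
    and K: "K + 3 * d = a * k + b * s"
  shows "edge_magic_labeling V E (F \<circ> h) K"
  unfolding edge_magic_labeling_def
proof (intro conjI ballI impI)
  show "bij_betw (F \<circ> h) (Inl ` V \<union> Inr ` E) {1..card V + card E}"
    by (rule bij_betw_trans[OF h F])
  have affine: "F (h z) + d = a * fst (h z) + b * snd (h z)" if "z \<in> Inl ` V \<union> Inr ` E" for z
    using F_affine[of "fst (h z)" "snd (h z)"] bij_betwE[OF h] that by simp
  fix x y assume xy: "x \<in> V" "y \<in> V" "{x, y} \<in> E"
  have "(F \<circ> h) (Inl x) + (F \<circ> h) (Inr {x, y}) + (F \<circ> h) (Inl y) + 3 * d
      = a * (fst (h (Inl x)) + fst (h (Inr {x, y})) + fst (h (Inl y)))
        + b * (snd (h (Inl x)) + snd (h (Inr {x, y})) + snd (h (Inl y)))"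
    using affine[of "Inl x"] affine[of "Inr {x, y}"] affine[of "Inl y"] xy
    by (simp add: algebra_simps)
  also have "\<dots> = K + 3 * d"
    using h_sums[OF xy] K by simp
  finally show "(F \<circ> h) (Inl x) + (F \<circ> h) (Inr {x, y}) + (F \<circ> h) (Inl y) = K"
    by simp
qed

lemma card_Inl_Inr: "finite A \<Longrightarrow> finite B \<Longrightarrow> card (Inl ` A \<union> Inr ` B) = card A + card B"
  by (subst card_Un_disjoint) (auto simp: card_image)

lemma bij_betw_if_inj_on_card_eq:
  assumes "inj_on f A" "f ` A \<subseteq> B" "finite B" "card A = card B"
  shows "bij_betw f A B"
proof (rule bij_betw_imageI[OF assms(1)])
  show "f ` A = B"
    using assms card_image[OF assms(1)] by (intro card_subset_eq) auto
qed

lemma mult_add_less_inject: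
  fixes c q r q' r' :: nat
  assumes "r < c" "r' < c" "c * q + r = c * q' + r'"
  shows "q = q' \<and> r = r'"
proof -
  have "q = (c * q + r) div c" "r = (c * q + r) mod c"
    using assms(1) by simp_all
  moreover have "q' = (c * q' + r') div c" "r' = (c * q' + r') mod c"
    using assms(2) by simp_all
  ultimately show ?thesis
    using assms(3) by argo
qed

lemma bij_betw_block_encoding:
  fixes m n :: nat
  shows "bij_betw (\<lambda>(x, t). (n + 1) * x + t - n) ({1..m} \<times> {0..n}) {1..m * (n + 1)}"
proof (rule bij_betw_if_inj_on_card_eq)
  have shift: "(n + 1) * x + t - n = (n + 1) * (x - 1) + t + 1" if "1 \<le> x" for x t :: nat
    using that by (cases x) (simp_all add: algebra_simps)
  have "x = x' \<and> t = t'"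
    if "1 \<le> x" "1 \<le> x'" "t \<le> n" "t' \<le> n" "(n + 1) * x + t - n = (n + 1) * x' + t' - n"
    for x t x' t' :: nat
  proof -
    have "(n + 1) * (x - 1) + t = (n + 1) * (x' - 1) + t'"
      using that shift by simp
    then show ?thesis
      using mult_add_less_inject[of t "n + 1" t' "x - 1" "x' - 1"] that by simp
  qed
  then show "inj_on (\<lambda>(x, t). (n + 1) * x + t - n) ({1..m} \<times> {0..n})"
    unfolding inj_on_def by auto
  have "(n + 1) * x + t - n \<in> {1..m * (n + 1)}" if "x \<in> {1..m}" "t \<in> {0..n}" for x t
  proof -
    have "(n + 1) * (x - 1) \<le> (n + 1) * (m - 1)"
      using that by (intro mult_le_mono2 diff_le_mono) simp
    then show ?thesis
      using that shift[of x t] by (cases m) (simp_all add: algebra_simps)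
  qed
  then show "(\<lambda>(x, t). (n + 1) * x + t - n) ` ({1..m} \<times> {0..n}) \<subseteq> {1..m * (n + 1)}"
    by auto
qed simp_all

lemma bij_betw_layer_encoding:
  fixes m n :: nat
  shows "bij_betw (\<lambda>(x, t). x + m * t) ({1..m} \<times> {0..n}) {1..m * (n + 1)}"
proof (rule bij_betw_if_inj_on_card_eq)
  have cancel: "x = x' \<and> t = t'"
    if "1 \<le> x" "x \<le> m" "1 \<le> x'" "x' \<le> m" "x + m * t = x' + m * t'" for x t x' t' :: nat
  proof -
    have "m * t + (x - 1) = m * t' + (x' - 1)"
      using that by simp
    then show ?thesis
      using mult_add_less_inject[of "x - 1" m "x' - 1" t t'] that by simp
  qed
  show "inj_on (\<lambda>(x, t). x + m * t) ({1..m} \<times> {0..n})"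
  proof (rule inj_onI)
    fix p q assume "p \<in> {1..m} \<times> {0..n}" "q \<in> {1..m} \<times> {0..n}"
      "(\<lambda>(x, t). x + m * t) p = (\<lambda>(x, t). x + m * t) q"
    moreover obtain x t x' t' where "p = (x, t)" "q = (x', t')"
      by fastforce
    ultimately show "p = q"
      using cancel[of x x' t t'] by simp
  qed
  have "x + m * t \<in> {1..m * (n + 1)}" if "x \<in> {1..m}" "t \<in> {0..n}" for x t
  proof -
    have "1 \<le> x" "x \<le> m" "m * t \<le> m * n"
      using that by (auto intro: mult_le_mono2)
    moreover have "m * (n + 1) = m * n + m"
      by simp
    ultimately have "1 \<le> x + m * t" "x + m * t \<le> m * (n + 1)"
      by linarith+
    then show ?thesis
      by simp
  qed
  then show "(\<lambda>(x, t). x + m * t) ` ({1..m} \<times> {0..n}) \<subseteq> {1..m * (n + 1)}"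
    by auto
qed simp_all

section \<open>The corona\<close>

definition skip_index :: "nat \<Rightarrow> nat \<Rightarrow> nat" where
  "skip_index r i = (if i \<le> r then i - 1 else i)"

lemma skip_index_le: "i \<le> n \<Longrightarrow> skip_index r i \<le> n"
  unfolding skip_index_def by auto

lemma bij_betw_skip_index:
  assumes "r \<le> n"
  shows "bij_betw (skip_index r) {1..n} ({0..n} - {r})"
proof (rule bij_betw_imageI)
  show "inj_on (skip_index r) {1..n}"
    unfolding skip_index_def inj_on_def by auto
  have "t \<in> skip_index r ` {1..n}" if "t \<in> {0..n} - {r}" for t
  proof (cases "t < r")
    case True
    then have "t = skip_index r (t + 1)" "t + 1 \<in> {1..n}"
      using assms unfolding skip_index_def by auto
    then show ?thesis by blast
  next
    case False
    then have "t = skip_index r t" "t \<in> {1..n}"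
      using that unfolding skip_index_def by auto
    then show ?thesis by blast
  qed
  moreover have "skip_index r ` {1..n} \<subseteq> {0..n} - {r}"
    unfolding skip_index_def by auto
  ultimately show "skip_index r ` {1..n} = {0..n} - {r}"
    by blast
qed

lemma corona_V_iff: "(v, i) \<in> corona_V V n \<longleftrightarrow> v \<in> V \<and> i \<le> n"
  unfolding corona_V_def by simp

lemma corona_E_cycle: "{u, w} \<in> E \<Longrightarrow> {(u, 0), (w, 0)} \<in> corona_E V E n"
  unfolding corona_E_def by blast

lemma corona_E_pendant: "v \<in> V \<Longrightarrow> i \<in> {1..n} \<Longrightarrow> {(v, 0), (v, i)} \<in> corona_E V E n"
  unfolding corona_E_def by auto

lemma corona_E_cases:
  assumes "e \<in> corona_E V E n"
  obtains (cycle) u w where "{u, w} \<in> E" "e = {(u, 0), (w, 0)}"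
    | (pendant) v i where "v \<in> V" "i \<in> {1..n}" "e = {(v, 0), (v, i)}"
  using assms unfolding corona_E_def by auto

lemma corona_E_subset:
  "corona_E V E n \<subseteq> (\<lambda>e. (\<lambda>x. (x, 0::nat)) ` e) ` E \<union> (\<lambda>(v, i). {(v, 0::nat), (v, i)}) ` (V \<times> {1..n})"
proof
  fix e assume "e \<in> corona_E V E n"
  then show "e \<in> (\<lambda>e. (\<lambda>x. (x, 0::nat)) ` e) ` E \<union> (\<lambda>(v, i). {(v, 0::nat), (v, i)}) ` (V \<times> {1..n})"
  proof (cases rule: corona_E_cases)
    case (cycle u w)
    then have "e = (\<lambda>x. (x, 0::nat)) ` {u, w}" by simp
    with cycle(1) show ?thesis by blast
  next
    case (pendant v i)
    then show ?thesis by auto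
  qed
qed

lemma card_corona_E_le:
  assumes "finite V" "finite E"
  shows "card (corona_E V E n) \<le> card E + card V * n"
proof -
  have "card (corona_E V E n)
      \<le> card ((\<lambda>e. (\<lambda>x. (x, 0::nat)) ` e) ` E \<union> (\<lambda>(v, i). {(v, 0::nat), (v, i)}) ` (V \<times> {1..n}))"
    using assms by (intro card_mono corona_E_subset) simp
  also have "\<dots> \<le> card ((\<lambda>e. (\<lambda>x. (x, 0::nat)) ` e) ` E)
      + card ((\<lambda>(v, i). {(v, 0::nat), (v, i)}) ` (V \<times> {1..n}))"
    by (rule card_Un_le)
  also have "\<dots> \<le> card E + card (V \<times> {1..n})"
    using assms by (intro add_mono card_image_le) simp_all
  finally show ?thesis
    by (simp add: card_cartesian_product)
qed

lemma card_corona_V: "card (corona_V V n) = card V * (n + 1)"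
  unfolding corona_V_def by (simp add: card_cartesian_product)

text \<open>A cycle edge of the corona is recognised by \<open>Max (snd ` e) = 0\<close>; for the \<open>i\<close>-th pendant
  edge \<open>{(v, 0), (v, i)}\<close> at \<open>v\<close>, \<open>Max (snd ` e) = i\<close> and \<open>the_elem (fst ` e) = v\<close>.\<close>
definition corona_pair_label ::
  "('a + 'a set \<Rightarrow> nat) \<Rightarrow> ('a \<Rightarrow> 'a) \<Rightarrow> nat \<Rightarrow> nat \<Rightarrow> ('a \<times> nat) + ('a \<times> nat) set \<Rightarrow> nat \<times> nat"
  where
  "corona_pair_label g \<psi> n r z = (case z of
      Inl (v, i) \<Rightarrow> if i = 0 then (g (Inl v), r) else (g (Inl (\<psi> v)), skip_index r i)
    | Inr e \<Rightarrow>
        if Max (snd ` e) = 0 then (g (Inr (fst ` e)), n - r)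
        else (g (Inr {the_elem (fst ` e), \<psi> (the_elem (fst ` e))}), n - skip_index r (Max (snd ` e))))"

lemma corona_pair_label_simps:
  "corona_pair_label g \<psi> n r (Inl (v, 0)) = (g (Inl v), r)"
  "i \<noteq> 0 \<Longrightarrow> corona_pair_label g \<psi> n r (Inl (v, i)) = (g (Inl (\<psi> v)), skip_index r i)"
  "corona_pair_label g \<psi> n r (Inr {(u, 0), (w, 0)}) = (g (Inr {u, w}), n - r)"
  "i \<noteq> 0 \<Longrightarrow> corona_pair_label g \<psi> n r (Inr {(v, 0), (v, i)}) = (g (Inr {v, \<psi> v}), n - skip_index r i)"
  unfolding corona_pair_label_def by simp_all

context
  fixes V :: "'a set" and E :: "'a set set" and g :: "'a + 'a set \<Rightarrow> nat" and k :: nat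
    and \<psi> :: "'a \<Rightarrow> 'a" and n r :: nat
  assumes G: "simple_graph V E" "two_regular V E"
    and g: "edge_magic_labeling V E g k"
    and \<psi>: "bij_betw \<psi> V V" "bij_betw (\<lambda>v. {v, \<psi> v}) V E"
    and r: "r \<le> n"
begin

lemma corona_pair_label_range:
  assumes "z \<in> Inl ` corona_V V n \<union> Inr ` corona_E V E n"
  shows "corona_pair_label g \<psi> n r z \<in> {1..2 * card V} \<times> {0..n}"
proof -
  note g_bij = two_regular_edge_magic_labeling_bij[OF G g]
  consider (vertex) v i where "v \<in> V" "i \<le> n" "z = Inl (v, i)"
    | (edge) e where "e \<in> corona_E V E n" "z = Inr e"
    using assms unfolding corona_V_def by auto
  then show ?thesis
  proof cases
    case (vertex v i)
    then have "\<psi> v \<in> V"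
      using \<psi>(1) by (auto dest: bij_betwE)
    with vertex show ?thesis
      using g_bij skip_index_le[of i n r] r
      by (cases "i = 0") (auto simp: corona_pair_label_simps dest: bij_betwE)
  next
    case (edge e)
    from edge(1) show ?thesis
    proof (cases rule: corona_E_cases)
      case (cycle u w)
      then show ?thesis
        using edge(2) g_bij by (auto simp: corona_pair_label_simps dest: bij_betwE)
    next
      case (pendant v i)
      then have "{v, \<psi> v} \<in> E"
        using \<psi>(2) by (auto dest: bij_betwE)
      with pendant show ?thesis
        using edge(2) g_bij skip_index_le[of i n r] by (auto simp: corona_pair_label_simps dest: bij_betwE)
    qed
  qed
qed

lemma corona_pair_label_surj_Inl:
  assumes "w \<in> V" "t \<le> n"
  shows "(g (Inl w), t) \<in> corona_pair_label g \<psi> n r ` (Inl ` corona_V V n \<union> Inr ` corona_E V E n)"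
proof (cases "t = r")
  case True
  then have "corona_pair_label g \<psi> n r (Inl (w, 0)) = (g (Inl w), t)"
    by (simp add: corona_pair_label_simps)
  moreover have "Inl (w, 0) \<in> Inl ` corona_V V n"
    using assms(1) by (simp add: corona_V_iff)
  ultimately show ?thesis
    by (metis UnI1 imageI)
next
  case False
  then obtain i where i: "i \<in> {1..n}" "skip_index r i = t"
    using assms(2) bij_betw_imp_surj_on[OF bij_betw_skip_index[OF r]] by (metis DiffI atLeastAtMost_iff
        imageE le0 singletonD)
  obtain v where v: "v \<in> V" "w = \<psi> v"
    using assms(1) bij_betw_imp_surj_on[OF \<psi>(1)] by blast
  have "corona_pair_label g \<psi> n r (Inl (v, i)) = (g (Inl w), t)"
    using i v by (simp add: corona_pair_label_simps)
  moreover have "Inl (v, i) \<in> Inl ` corona_V V n"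
    using i v by (simp add: corona_V_iff)
  ultimately show ?thesis
    by (metis UnI1 imageI)
qed

lemma corona_pair_label_surj_Inr:
  assumes "e \<in> E" "t \<le> n"
  shows "(g (Inr e), t) \<in> corona_pair_label g \<psi> n r ` (Inl ` corona_V V n \<union> Inr ` corona_E V E n)"
proof (cases "t = n - r")
  case True
  obtain u w where "e = {u, w}"
    using simple_graph_edgeE[OF G(1) assms(1)] by metis
  then have "corona_pair_label g \<psi> n r (Inr {(u, 0), (w, 0)}) = (g (Inr e), t)"
    "Inr {(u, 0), (w, 0)} \<in> Inr ` corona_E V E n"
    using assms(1) True corona_E_cycle[of u w E] by (simp_all add: corona_pair_label_simps)
  then show ?thesis
    by (metis UnI2 imageI)
next
  case False
  then obtain i where i: "i \<in> {1..n}" "skip_index r i = n - t"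
    using assms(2) r bij_betw_imp_surj_on[OF bij_betw_skip_index[OF r]]
    by (metis DiffI atLeastAtMost_iff diff_le_self imageE le0 singletonD diff_diff_cancel)
  obtain v where v: "v \<in> V" "e = {v, \<psi> v}"
    using assms(1) bij_betw_imp_surj_on[OF \<psi>(2)] by blast
  have "corona_pair_label g \<psi> n r (Inr {(v, 0), (v, i)}) = (g (Inr e), t)"
    using i v assms(2) by (auto simp: corona_pair_label_simps)
  moreover have "Inr {(v, 0), (v, i)} \<in> Inr ` corona_E V E n"
    using i v corona_E_pendant[of v V i n E] by simp
  ultimately show ?thesis
    by (metis UnI2 imageI)
qed

lemma corona_pair_label_image:
  "corona_pair_label g \<psi> n r ` (Inl ` corona_V V n \<union> Inr ` corona_E V E n) = {1..2 * card V} \<times> {0..n}"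
proof
  show "corona_pair_label g \<psi> n r ` (Inl ` corona_V V n \<union> Inr ` corona_E V E n) \<subseteq> {1..2 * card V} \<times> {0..n}"
    using corona_pair_label_range by blast
  show "{1..2 * card V} \<times> {0..n} \<subseteq> corona_pair_label g \<psi> n r ` (Inl ` corona_V V n \<union> Inr ` corona_E V E n)"
  proof clarify
    fix x t assume "x \<in> {1..2 * card V}" "t \<in> {0..n}"
    moreover obtain z where "z \<in> Inl ` V \<union> Inr ` E" "x = g z"
      using calculation(1) bij_betw_imp_surj_on[OF two_regular_edge_magic_labeling_bij[OF G g]]
      by (metis imageE)
    ultimately show "(x, t) \<in> corona_pair_label g \<psi> n r ` (Inl ` corona_V V n \<union> Inr ` corona_E V E n)"
      using corona_pair_label_surj_Inl corona_pair_label_surj_Inr by auto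
  qed
qed

lemma bij_betw_corona_pair_label:
  "bij_betw (corona_pair_label g \<psi> n r) (Inl ` corona_V V n \<union> Inr ` corona_E V E n) ({1..2 * card V} \<times> {0..n})"
    (is "bij_betw ?f ?D ?P")
proof (rule bij_betw_imageI[OF _ corona_pair_label_image])
  have fin: "finite V" "finite E"
    by (rule simple_graph_finite[OF G(1)])+
  have fin_V: "finite (corona_V V n)"
    unfolding corona_V_def using fin by simp
  have fin_E: "finite (corona_E V E n)"
    by (rule finite_subset[OF corona_E_subset]) (simp add: fin)
  then have fin_D: "finite ?D"
    using fin_V by simp
  have "card ?D = card (corona_V V n) + card (corona_E V E n)"
    by (rule card_Inl_Inr[OF fin_V fin_E])
  also have "\<dots> \<le> card V * (n + 1) + (card E + card V * n)"
    using card_corona_E_le[OF fin] by (simp add: card_corona_V)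
  also have "\<dots> = card ?P"
    using two_regular_card_edges[OF G] by (simp add: card_cartesian_product algebra_simps)
  also have "\<dots> = card (?f ` ?D)"
    by (simp add: corona_pair_label_image)
  finally have "card (?f ` ?D) = card ?D"
    using card_image_le[OF fin_D, of ?f] by linarith
  then show "inj_on ?f ?D"
    by (rule eq_card_imp_inj_on[OF fin_D])
qed

lemma corona_pair_label_sums:
  assumes "x \<in> corona_V V n" "y \<in> corona_V V n" "{x, y} \<in> corona_E V E n"
  shows "fst (corona_pair_label g \<psi> n r (Inl x)) + fst (corona_pair_label g \<psi> n r (Inr {x, y}))
           + fst (corona_pair_label g \<psi> n r (Inl y)) = k \<and>
         snd (corona_pair_label g \<psi> n r (Inl x)) + snd (corona_pair_label g \<psi> n r (Inr {x, y}))
           + snd (corona_pair_label g \<psi> n r (Inl y)) = n + r"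
    (is "?S x y")
proof -
  have sym: "?S x' y' \<longleftrightarrow> ?S y' x'" for x' y'
    by (simp add: insert_commute add.commute add.left_commute)
  from assms(3) show ?thesis
  proof (cases rule: corona_E_cases)
    case (cycle u w)
    then have "u \<in> V" "w \<in> V"
      using simple_graph_edge_subset[OF G(1)] by auto
    then have "?S (u, 0) (w, 0)"
      using edge_magic_labelingD[OF g _ _ cycle(1)] r by (simp add: corona_pair_label_simps)
    then show ?thesis
      using cycle(2) sym by (auto simp: doubleton_eq_iff)
  next
    case (pendant v i)
    then have "\<psi> v \<in> V" "{v, \<psi> v} \<in> E" "skip_index r i \<le> n"
      using \<psi> skip_index_le[of i n r] by (auto dest: bij_betwE)
    then have "?S (v, 0) (v, i)"
      using edge_magic_labelingD[OF g pendant(1)] pendant(2) by (simp add: corona_pair_label_simps)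
    then show ?thesis
      using pendant(3) sym by (auto simp: doubleton_eq_iff)
  qed
qed

end

section \<open>Counting valences of the corona\<close>

lemma tau_corona_affine:
  fixes F :: "nat \<times> nat \<Rightarrow> nat"
  assumes G: "simple_graph V E" "two_regular V E" and k: "k \<in> tau V E" and r: "r \<le> n"
    and F: "bij_betw F ({1..2 * card V} \<times> {0..n}) {1..2 * card V * (n + 1)}"
    and F_affine: "\<And>x t. (x, t) \<in> {1..2 * card V} \<times> {0..n} \<Longrightarrow> F (x, t) + d = a * x + b * t"
    and K: "K + 3 * d = a * k + b * (n + r)"
  shows "K \<in> tau (corona_V V n) (corona_E V E n)"
proof -
  obtain \<psi> where \<psi>: "bij_betw \<psi> V V" "bij_betw (\<lambda>v. {v, \<psi> v}) V E"
    using two_regular_orientation[OF G] .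
  obtain g where g: "edge_magic_labeling V E g k"
    using k unfolding tau_def by blast
  note h = bij_betw_corona_pair_label[OF G g \<psi> r]
  have "finite (corona_V V n)" "finite (corona_E V E n)"
    using bij_betw_finite[OF h] by (auto dest: finite_imageD)
  then have "card (corona_V V n) + card (corona_E V E n) = 2 * card V * (n + 1)"
    using bij_betw_same_card[OF h] by (simp add: card_Inl_Inr card_cartesian_product)
  then have "edge_magic_labeling (corona_V V n) (corona_E V E n) (F \<circ> corona_pair_label g \<psi> n r) K"
    using F F_affine K corona_pair_label_sums[OF G g \<psi> r]
    by (intro edge_magic_labeling_comp[OF h]) simp_all
  then show ?thesis
    unfolding tau_def by blast
qed

lemma block_valence_in_tau_corona:
  assumes G: "simple_graph V E" "two_regular V E" "V \<noteq> {}" and k: "k \<in> tau V E" and r: "r \<le> n"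
  shows "(n + 1) * k + r - 2 * n \<in> tau (corona_V V n) (corona_E V E n)"
proof (rule tau_corona_affine[OF G(1,2) k r bij_betw_block_encoding])
  obtain g where "edge_magic_labeling V E g k"
    using k unfolding tau_def by blast
  then have "2 * card V + 2 < k"
    by (rule two_regular_valence_bounds(1)[OF G])
  then have "2 \<le> k"
    by simp
  then have "(n + 1) * 2 \<le> (n + 1) * k"
    by (rule mult_le_mono2)
  then show "(n + 1) * k + r - 2 * n + 3 * n = (n + 1) * k + 1 * (n + r)"
    by simp
  show "(case (x, t) of (x, t) \<Rightarrow> (n + 1) * x + t - n) + n = (n + 1) * x + 1 * t"
    if "(x, t) \<in> {1..2 * card V} \<times> {0..n}" for x t
  proof -
    have "(n + 1) * 1 \<le> (n + 1) * x"
      using that by (intro mult_le_mono2) simp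
    then show ?thesis by simp
  qed
qed

lemma layer_valence_in_tau_corona:
  assumes G: "simple_graph V E" "two_regular V E" and k: "k \<in> tau V E" and r: "r \<le> n"
  shows "k + 2 * card V * (n + r) \<in> tau (corona_V V n) (corona_E V E n)"
  by (rule tau_corona_affine[where d = 0 and a = 1 and b = "2 * card V",
        OF G k r bij_betw_layer_encoding]) simp_all

text \<open>The block values are pairwise distinct and lie strictly between the two layer values
  \<open>min T + 2 p n\<close> and \<open>max T + 4 p n\<close>.\<close>
lemma card_block_layer_values_ge:
  fixes T T' :: "nat set" and n p :: nat
  assumes T: "finite T" "T \<noteq> {}" and T': "finite T'" and n: "1 \<le> n"
    and bounds: "\<And>k. k \<in> T \<Longrightarrow> 2 * p + 2 < k \<and> k < 4 * p + 1"
    and block: "\<And>k r. k \<in> T \<Longrightarrow> r \<le> n \<Longrightarrow> (n + 1) * k + r - 2 * n \<in> T'"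
    and layer: "\<And>k r. k \<in> T \<Longrightarrow> r \<le> n \<Longrightarrow> k + 2 * p * (n + r) \<in> T'"
  shows "(n + 1) * card T + 2 \<le> card T'"
proof -
  define f where "f = (\<lambda>(k, r). (n + 1) * k + r - 2 * n)"
  define A where "A = f ` (T \<times> {0..n})"
  define K1 where "K1 = Min T + 2 * p * n"
  define K2 where "K2 = Max T + 4 * p * n"
  have shift: "(n + 1) * k + r - 2 * n = (n + 1) * (k - 2) + r + 2" if "k \<in> T" for k r
  proof -
    have "2 \<le> k"
      using bounds[OF that] by simp
    define j where "j = k - 2"
    then have j: "k = j + 2"
      using \<open>2 \<le> k\<close> by simp
    then have "(n + 1) * k = (n + 1) * j + 2 * n + 2"
      by (simp add: algebra_simps)
    then show ?thesis
      using j by simp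
  qed
  have "inj_on f (T \<times> {0..n})"
  proof (rule inj_onI)
    fix q q' assume "q \<in> T \<times> {0..n}" "q' \<in> T \<times> {0..n}" "f q = f q'"
    moreover obtain k r k' r' where "q = (k, r)" "q' = (k', r')"
      by fastforce
    ultimately show "q = q'"
      using mult_add_less_inject[of r "n + 1" r' "k - 2" "k' - 2"] shift bounds
      unfolding f_def by fastforce
  qed
  then have card_A: "card A = (n + 1) * card T"
    unfolding A_def by (simp add: card_image card_cartesian_product)
  have A_between: "K1 < y \<and> y < K2" if y: "y \<in> A" for y
  proof -
    obtain k r where kr: "k \<in> T" "r \<le> n" "y = (n + 1) * k + r - 2 * n"
      using y unfolding A_def f_def by auto
    have "Min T \<le> k" "k \<le> Max T" "2 * p + 3 \<le> k" "k \<le> 4 * p"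
      using kr(1) bounds[OF kr(1)] T by auto
    then have "n * (2 * p + 3) \<le> n * k" "n * k \<le> n * (4 * p)"
      by (simp_all only: mult_le_mono2)
    moreover have "n * (2 * p + 3) = 2 * (p * n) + 3 * n" "n * (4 * p) = 4 * (p * n)"
      "(n + 1) * k = k + n * k" "K1 = Min T + 2 * (p * n)" "K2 = Max T + 4 * (p * n)"
      unfolding K1_def K2_def by (simp_all add: algebra_simps)
    ultimately show ?thesis
      using kr \<open>Min T \<le> k\<close> \<open>k \<le> Max T\<close> n by linarith
  qed
  have "K1 \<in> T'" "K2 \<in> T'"
    using layer[of "Min T" 0] layer[of "Max T" n] T unfolding K1_def K2_def
    by (simp_all add: algebra_simps)
  with A_between have sub: "insert K1 (insert K2 A) \<subseteq> T'"
    using block unfolding A_def f_def by auto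
  have "card (insert K1 (insert K2 A)) = card A + 2"
  proof -
    have "finite A" "A \<noteq> {}"
      unfolding A_def using T by auto
    then have "K1 \<noteq> K2" "K1 \<notin> A" "K2 \<notin> A"
      using A_between by fastforce+
    with \<open>finite A\<close> show ?thesis
      by simp
  qed
  also have "\<dots> = (n + 1) * card T + 2"
    by (simp add: card_A)
  finally show ?thesis
    using card_mono[OF T' sub] by simp
qed

theorem mainTheorem4:
  fixes V :: "'a set" and E :: "'a set set" and n :: nat
  assumes "simple_graph V E"
    and "V \<noteq> {}"
    and "two_regular V E"
    and "edge_magic V E"
    and "n \<ge> 1"
  shows "card (tau (corona_V V n) (corona_E V E n)) \<ge> (n + 1) * card (tau V E) + 2"
proof (rule card_block_layer_values_ge)
  show "2 * card V + 2 < k \<and> k < 4 * card V + 1" if "k \<in> tau V E" for k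
    using that two_regular_valence_bounds[OF assms(1,3,2)] unfolding tau_def by blast
  then show "finite (tau V E)"
    by (meson finite_atMost finite_subset less_imp_le_nat subsetI atMost_iff)
  show "tau V E \<noteq> {}"
    using assms(4) unfolding edge_magic_def tau_def by blast
  obtain v where v: "v \<in> V"
    using assms(2) by blast
  then show "finite (tau (corona_V V n) (corona_E V E n))"
    using assms(5) by (intro finite_tau[of "(v, 0)" _ "(v, 1)"]) (auto simp: corona_V_iff corona_E_pendant)
  show "(n + 1) * k + r - 2 * n \<in> tau (corona_V V n) (corona_E V E n)" if "k \<in> tau V E" "r \<le> n" for k r
    using block_valence_in_tau_corona[OF assms(1,3,2) that] .
  show "k + 2 * card V * (n + r) \<in> tau (corona_V V n) (corona_E V E n)" if "k \<in> tau V E" "r \<le> n" for k r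
    using layer_valence_in_tau_corona[OF assms(1,3) that] .
qed (rule assms(5))

end
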